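(* Let $X$ be an integrable real random variable ($d=1$) and let $Y_1,\ldots,Y_k\in\mathbb{R}^m$ be conditionally i.i.d. given $X$ with common conditional density $f_{Y|X}$ (joint density $f_X(x)\prod_{i=1}^k f_{Y|X}(y_i|x)$). Let $Y$ be a generic observation with $(X,Y)$ having density $f_X(x)f_{Y|X}(y|x)$, $g(y)=\mathbb{E}[X|Y=y]$, $Z=X-g(Y)$, and $D_2(k)=\mathbb{E}[\min_{1\le i\le k}(X-g(Y_i))^2]$. Assume that conditioned on $X=x$, $Z$ has a Lebesgue density $f_{Z|X}(z|x)$, and that for some $r>0$, \[ M=\sup_{x}\sup_{|z|\le r}f_{Z|X}(z|x)<\infty. \] Then for all sufficiently large $k$, \[ D_2(k)\ge e^{-2}\left(\frac{1}{2M\left(1+\frac k2\right)}\right)^2, \] so that $D_2(k)=\Omega(k^{-2})$.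
   Context: $f=\Omega(h)$ means $f(k)\ge c\,h(k)$ for some $c>0$ and all sufficiently large $k$. *)

theory Defs
  imports "HOL-Probability.Probability"
begin

text \<open>The canonical version of the regression function g(y) = E[X | Y = y],
  computed from the joint density fX(x) fYX(x,y) of (X,Y).
  Here fYX x y stands for the conditional density f_{Y|X}(y|x).\<close>
definition cond_mean :: "(real \<Rightarrow> real) \<Rightarrow> (real \<Rightarrow> 'b::euclidean_space \<Rightarrow> real) \<Rightarrow> 'b \<Rightarrow> real" where
  "cond_mean fX fYX y =
     (\<integral>x. x * fX x * fYX x y \<partial>lborel) / (\<integral>x. fX x * fYX x y \<partial>lborel)"

text \<open>D_2(k) = E[min_{1<=i<=k} (X - g(Y_i))^2], where (X,Y_1,...,Y_k) has joint density
  fX(x) * prod_i fYX(x, y_i). Indices are 0..k-1. Nonnegative (possibly infinite) expectation.\<close>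
definition D2 :: "(real \<Rightarrow> real) \<Rightarrow> (real \<Rightarrow> 'b::euclidean_space \<Rightarrow> real) \<Rightarrow> nat \<Rightarrow> ennreal" where
  "D2 fX fYX k =
     (\<integral>\<^sup>+x. \<integral>\<^sup>+ys. ennreal (fX x * (\<Prod>i<k. fYX x (ys i)) *
                     Min ((\<lambda>i. (x - cond_mean fX fYX (ys i))\<^sup>2) ` {..<k}))
        \<partial>(PiM {..<k} (\<lambda>_. (lborel :: 'b measure))) \<partial>lborel)"

end

theory Submission
  imports Defs
begin

text \<open>Given X = x, each error x - g(Y_i) has the density fZX x, which is at most M on [-r, r];
  so for s \<le> r it exceeds s in absolute value with probability at least 1 - 2 M s, and by
  conditional independence all k errors do so with probability at least (1 - 2 M s)^k. Hence
  D_2(k) \<ge> s^2 (1 - 2 M s)^k. The radius s = 1/(M (k + 2)) maximises this bound, and there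
  (1 - 2 M s)^k = (k/(k + 2))^k \<ge> e^-2.\<close>

lemma cond_mean_borel_measurable:
  fixes fYX :: "real \<Rightarrow> 'b::euclidean_space \<Rightarrow> real"
  assumes "fX \<in> borel_measurable lborel"
    and "(\<lambda>(x, y). fYX x y) \<in> borel_measurable (lborel \<Otimes>\<^sub>M (lborel :: 'b measure))"
  shows "cond_mean fX fYX \<in> borel_measurable (lborel :: 'b measure)"
proof -
  have [measurable]: "(\<lambda>(y, x). fYX x y) \<in> borel_measurable ((lborel :: 'b measure) \<Otimes>\<^sub>M lborel)"
    using assms(2) measurable_pair_swap_iff[of "\<lambda>(x, y). fYX x y" lborel lborel borel] by simp
  have [measurable]: "(\<lambda>y. \<integral>x. x * fX x * fYX x y \<partial>lborel) \<in> borel_measurable (lborel :: 'b measure)"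
    "(\<lambda>y. \<integral>x. fX x * fYX x y \<partial>lborel) \<in> borel_measurable (lborel :: 'b measure)"
    using assms(1) by (auto intro!: lborel.borel_measurable_lebesgue_integral)
  show ?thesis
    unfolding cond_mean_def[abs_def] by measurable
qed

lemma exp_neg_le_power_div_add:
  fixes a :: real and k :: nat
  assumes "0 \<le> a" and "k > 0"
  shows "exp (-a) \<le> (k / (k + a)) ^ k"
proof -
  have "(k / (k + a)) ^ k = inverse ((1 + a / k) ^ k)"
    using assms by (simp add: field_simps power_inverse[symmetric])
  moreover have "(1 + a / k) ^ k \<le> exp a"
    using assms by (intro exp_ge_one_plus_x_over_n_power_n) auto
  moreover have "0 < (1 + a / k) ^ k"
    using assms by (intro zero_less_power add_pos_nonneg) auto
  ultimately show ?thesis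
    by (simp add: exp_minus le_imp_inverse_le)
qed

lemma optimal_radius_bounds:
  fixes M r :: real and k :: nat
  assumes "0 < M" and "0 < r" and "0 < k" and "1 / (M * r) \<le> k"
  defines "s \<equiv> 1 / (2 * M * (1 + real k / 2))"
  shows "0 < s" and "s \<le> r" and "2 * M * s \<le> 1" and "exp (-2) \<le> (1 - 2 * M * s) ^ k"
proof -
  have s_eq: "s = 1 / (M * (k + 2))"
    unfolding s_def by (simp add: algebra_simps)
  have two_M_s: "2 * M * s = 2 / (k + 2)"
    using assms(1) by (simp add: s_eq)
  then show "2 * M * s \<le> 1"
    by simp
  from two_M_s have "1 - 2 * M * s = k / (k + 2)"
    by (simp add: field_simps)
  then show "exp (-2) \<le> (1 - 2 * M * s) ^ k"
    using exp_neg_le_power_div_add[of 2 k] assms(3) by (simp add: add.commute)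
  show "0 < s"
    using assms(1) by (simp add: s_eq)
  have "s \<le> 1 / (M * k)"
    unfolding s_eq using assms(1,3) by (intro divide_left_mono mult_pos_pos) auto
  also have "\<dots> \<le> r"
    using assms(1-4) by (simp add: field_simps)
  finally show "s \<le> r" .
qed

lemma emeasure_abs_gt_ge_of_bounded_density:
  fixes X :: "'a \<Rightarrow> real" and f :: "real \<Rightarrow> real"
  assumes P: "prob_space P" and X: "X \<in> measurable P lborel"
    and distr_X: "distr P lborel X = density lborel (\<lambda>z. ennreal (f z))"
    and f: "f \<in> borel_measurable lborel"
    and f_le: "\<And>z. \<bar>z\<bar> \<le> s \<Longrightarrow> f z \<le> M" and "0 \<le> s" "0 \<le> M"
  shows "ennreal (1 - 2 * M * s) \<le> emeasure P {\<omega> \<in> space P. s < \<bar>X \<omega>\<bar>}"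
proof -
  define N where "N = density lborel (\<lambda>z. ennreal (f z))"
  interpret N: prob_space N
    unfolding N_def using prob_space.prob_space_distr[OF P X] distr_X by simp
  have "emeasure N {-s..s} = (\<integral>\<^sup>+z. ennreal (f z) * indicator {-s..s} z \<partial>lborel)"
    unfolding N_def using f by (simp add: emeasure_density)
  also have "\<dots> \<le> (\<integral>\<^sup>+z. ennreal M * indicator {-s..s} z \<partial>lborel)"
    by (intro nn_integral_mono) (auto simp: indicator_def intro!: f_le ennreal_leI)
  also have "\<dots> = ennreal (2 * M * s)"
    using assms by (simp add: nn_integral_cmult_indicator ennreal_mult'[symmetric] mult_ac)
  finally have "N.prob {-s..s} \<le> 2 * M * s"
    using assms by (simp add: N.emeasure_eq_measure)
  moreover have "N.prob {z. s < \<bar>z\<bar>} = 1 - N.prob {-s..s}"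
  proof -
    have "space N - {-s..s} = {z. s < \<bar>z\<bar>}"
      by (auto simp: N_def)
    then show ?thesis
      using N.prob_compl[of "{-s..s}"] by (simp add: N_def)
  qed
  moreover have "emeasure P {\<omega> \<in> space P. s < \<bar>X \<omega>\<bar>} = emeasure N {z. s < \<bar>z\<bar>}"
    using emeasure_distr[OF X, of "{z. s < \<bar>z\<bar>}"] distr_X
    by (simp add: N_def vimage_def Int_def conj_commute)
  ultimately show ?thesis
    by (simp add: N.emeasure_eq_measure ennreal_leI)
qed

lemma nn_integral_prod_Min_ge:
  fixes f w :: "'a \<Rightarrow> real" and k :: nat
  assumes "sigma_finite_measure \<mu>" and f: "f \<in> borel_measurable \<mu>" and A: "A \<in> sets \<mu>"
    and f_nonneg: "\<And>y. 0 \<le> f y" and w_ge: "\<And>y. y \<in> A \<Longrightarrow> t \<le> w y"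
    and "0 \<le> t" and "k > 0"
  shows "ennreal t * emeasure (density \<mu> (\<lambda>y. ennreal (f y))) A ^ k
    \<le> (\<integral>\<^sup>+ys. ennreal ((\<Prod>i<k. f (ys i)) * Min ((\<lambda>i. w (ys i)) ` {..<k})) \<partial>PiM {..<k} (\<lambda>_. \<mu>))"
proof -
  interpret product_sigma_finite "\<lambda>_. \<mu>"
    using assms(1) by (simp add: product_sigma_finite_def)
  have pointwise: "ennreal t * (\<Prod>i<k. ennreal (f (ys i)) * indicator A (ys i))
      \<le> ennreal ((\<Prod>i<k. f (ys i)) * Min ((\<lambda>i. w (ys i)) ` {..<k}))" for ys
  proof (cases "\<forall>i<k. ys i \<in> A")
    case True
    then have "t \<le> Min ((\<lambda>i. w (ys i)) ` {..<k})"
      using \<open>k > 0\<close> by (auto simp: lessThan_empty_iff intro: w_ge)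
    then have "t * (\<Prod>i<k. f (ys i)) \<le> (\<Prod>i<k. f (ys i)) * Min ((\<lambda>i. w (ys i)) ` {..<k})"
      by (subst mult.commute, rule mult_left_mono) (auto intro: prod_nonneg f_nonneg)
    with True show ?thesis
      using f_nonneg \<open>0 \<le> t\<close>
      by (auto simp: prod_ennreal prod_nonneg ennreal_mult'[symmetric] intro!: ennreal_leI)
  next
    case False
    then obtain j where "j < k" and "ys j \<notin> A"
      by auto
    then have "(\<Prod>i<k. ennreal (f (ys i)) * indicator A (ys i)) = 0"
      by (intro prod_zero bexI[of _ j]) auto
    then show ?thesis
      by (metis mult_zero_right zero_le)
  qed
  have "emeasure (density \<mu> (\<lambda>y. ennreal (f y))) A ^ k
      = (\<Prod>i<k. \<integral>\<^sup>+y. ennreal (f y) * indicator A y \<partial>\<mu>)"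
    using f A by (simp add: emeasure_density)
  also have "\<dots> = (\<integral>\<^sup>+ys. (\<Prod>i<k. ennreal (f (ys i)) * indicator A (ys i)) \<partial>PiM {..<k} (\<lambda>_. \<mu>))"
    using f A by (intro product_nn_integral_prod[symmetric]) auto
  finally have "ennreal t * emeasure (density \<mu> (\<lambda>y. ennreal (f y))) A ^ k
      = (\<integral>\<^sup>+ys. ennreal t * (\<Prod>i<k. ennreal (f (ys i)) * indicator A (ys i)) \<partial>PiM {..<k} (\<lambda>_. \<mu>))"
    using f A by (simp add: nn_integral_cmult)
  also have "\<dots> \<le> (\<integral>\<^sup>+ys. ennreal ((\<Prod>i<k. f (ys i)) * Min ((\<lambda>i. w (ys i)) ` {..<k})) \<partial>PiM {..<k} (\<lambda>_. \<mu>))"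
    by (intro nn_integral_mono pointwise)
  finally show ?thesis .
qed

lemma D2_ge_of_miss_probability:
  fixes fX :: "real \<Rightarrow> real" and fYX :: "real \<Rightarrow> 'b::euclidean_space \<Rightarrow> real" and k :: nat
  assumes fX_meas: "fX \<in> borel_measurable lborel" and fX_nonneg: "\<And>x. 0 \<le> fX x"
    and fX_prob: "(\<integral>\<^sup>+x. ennreal (fX x) \<partial>lborel) = 1"
    and fYX_meas: "(\<lambda>(x, y). fYX x y) \<in> borel_measurable (lborel \<Otimes>\<^sub>M (lborel :: 'b measure))"
    and fYX_nonneg: "\<And>x y. 0 \<le> fYX x y"
    and miss: "\<And>x. ennreal p \<le> emeasure (density lborel (\<lambda>y. ennreal (fYX x y)))
                                   {y. s < \<bar>x - cond_mean fX fYX y\<bar>}"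
    and "0 \<le> s" and "0 \<le> p" and "k > 0"
  shows "ennreal (s\<^sup>2 * p ^ k) \<le> D2 fX fYX k"
proof -
  define g where "g = cond_mean fX fYX"
  have [measurable]: "g \<in> borel_measurable lborel"
    unfolding g_def using fX_meas fYX_meas by (rule cond_mean_borel_measurable)
  have [measurable]: "fYX x \<in> borel_measurable lborel" for x
    using measurable_Pair2[OF fYX_meas, of x] by simp
  let ?min_sq = "\<lambda>x ys. (\<Prod>i<k. fYX x (ys i)) * Min ((\<lambda>i. (x - g (ys i))\<^sup>2) ` {..<k})"
  have inner: "ennreal (s\<^sup>2 * p ^ k) \<le> (\<integral>\<^sup>+ys. ennreal (?min_sq x ys) \<partial>PiM {..<k} (\<lambda>_. lborel))" for x
  proof -
    have "ennreal (s\<^sup>2 * p ^ k) = ennreal (s\<^sup>2) * ennreal p ^ k"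
      using assms by (simp add: ennreal_mult ennreal_power)
    also have "\<dots> \<le> ennreal (s\<^sup>2) * emeasure (density lborel (\<lambda>y. ennreal (fYX x y))) {y. s < \<bar>x - g y\<bar>} ^ k"
      using miss[of x] by (intro mult_left_mono power_mono) (auto simp: g_def)
    also have "\<dots> \<le> (\<integral>\<^sup>+ys. ennreal (?min_sq x ys) \<partial>PiM {..<k} (\<lambda>_. lborel))"
      using \<open>0 \<le> s\<close> \<open>k > 0\<close>
      by (intro nn_integral_prod_Min_ge sigma_finite_lborel fYX_nonneg)
         (auto simp: abs_le_square_iff[symmetric])
    finally show ?thesis .
  qed
  have "ennreal (s\<^sup>2 * p ^ k) = (\<integral>\<^sup>+x. ennreal (fX x) * ennreal (s\<^sup>2 * p ^ k) \<partial>lborel)"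
    using fX_meas by (simp add: nn_integral_multc fX_prob)
  also have "\<dots> \<le> (\<integral>\<^sup>+x. ennreal (fX x) * (\<integral>\<^sup>+ys. ennreal (?min_sq x ys) \<partial>PiM {..<k} (\<lambda>_. lborel)) \<partial>lborel)"
    by (intro nn_integral_mono mult_left_mono inner) simp
  also have "\<dots> = D2 fX fYX k"
    unfolding D2_def g_def[symmetric]
    by (intro nn_integral_cong) (simp add: nn_integral_cmult ennreal_mult' fX_nonneg mult.assoc)
  finally show ?thesis .
qed

lemma D2_ge_of_bounded_error_density:
  fixes fX :: "real \<Rightarrow> real" and fYX :: "real \<Rightarrow> 'b::euclidean_space \<Rightarrow> real"
    and fZX :: "real \<Rightarrow> real \<Rightarrow> real" and k :: nat
  assumes fX_meas: "fX \<in> borel_measurable lborel" and fX_nonneg: "\<And>x. 0 \<le> fX x"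
    and fX_prob: "(\<integral>\<^sup>+x. ennreal (fX x) \<partial>lborel) = 1"
    and fYX_meas: "(\<lambda>(x, y). fYX x y) \<in> borel_measurable (lborel \<Otimes>\<^sub>M (lborel :: 'b measure))"
    and fYX_nonneg: "\<And>x y. 0 \<le> fYX x y"
    and fYX_prob: "\<And>x. (\<integral>\<^sup>+y. ennreal (fYX x y) \<partial>(lborel :: 'b measure)) = 1"
    and fZX_meas: "\<And>x. fZX x \<in> borel_measurable lborel"
    and fZX_density: "\<And>x. distr (density (lborel :: 'b measure) (\<lambda>y. ennreal (fYX x y))) lborel
                              (\<lambda>y. x - cond_mean fX fYX y)
                          = density lborel (\<lambda>z. ennreal (fZX x z))"
    and fZX_le: "\<And>x z. \<bar>z\<bar> \<le> s \<Longrightarrow> fZX x z \<le> M"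
    and "0 \<le> s" and "0 \<le> M" and "2 * M * s \<le> 1" and "k > 0"
  shows "ennreal (s\<^sup>2 * (1 - 2 * M * s) ^ k) \<le> D2 fX fYX k"
proof (rule D2_ge_of_miss_probability[OF fX_meas fX_nonneg fX_prob fYX_meas fYX_nonneg])
  fix x
  have "prob_space (density lborel (\<lambda>y. ennreal (fYX x y)))"
    using measurable_Pair2[OF fYX_meas, of x] by (intro prob_spaceI) (simp add: emeasure_density fYX_prob)
  then show "ennreal (1 - 2 * M * s) \<le> emeasure (density lborel (\<lambda>y. ennreal (fYX x y)))
                                         {y. s < \<bar>x - cond_mean fX fYX y\<bar>}"
    using emeasure_abs_gt_ge_of_bounded_density[OF _ _ fZX_density fZX_meas, of x s M]
      cond_mean_borel_measurable[OF fX_meas fYX_meas] fZX_le assms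
    by auto
qed (use assms in auto)

theorem corollary3:
  fixes fX :: "real \<Rightarrow> real"
    and fYX :: "real \<Rightarrow> 'b::euclidean_space \<Rightarrow> real"
    and fZX :: "real \<Rightarrow> real \<Rightarrow> real"
    and r M :: real
  assumes fX_meas: "fX \<in> borel_measurable lborel"
    and fX_nonneg: "\<And>x. fX x \<ge> 0"
    and fX_prob: "(\<integral>\<^sup>+x. ennreal (fX x) \<partial>lborel) = 1"
    and X_integrable: "integrable lborel (\<lambda>x. x * fX x)"
    and fYX_meas: "(\<lambda>(x, y). fYX x y) \<in> borel_measurable (lborel \<Otimes>\<^sub>M (lborel :: 'b measure))"
    and fYX_nonneg: "\<And>x y. fYX x y \<ge> 0"
    and fYX_prob: "\<And>x. (\<integral>\<^sup>+y. ennreal (fYX x y) \<partial>(lborel :: 'b measure)) = 1"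
    and fZX_meas: "\<And>x. fZX x \<in> borel_measurable lborel"
    and fZX_nonneg: "\<And>x z. fZX x z \<ge> 0"
    and fZX_density: "\<And>x. distr (density (lborel :: 'b measure) (\<lambda>y. ennreal (fYX x y))) lborel
                              (\<lambda>y. x - cond_mean fX fYX y)
                          = density lborel (\<lambda>z. ennreal (fZX x z))"
    and r_pos: "r > 0"
    and M_bdd: "bdd_above {fZX x z | x z. \<bar>z\<bar> \<le> r}"
    and M_def: "M = Sup {fZX x z | x z. \<bar>z\<bar> \<le> r}"
  shows "\<exists>K. \<forall>k\<ge>K. ennreal (exp (-2) * (1 / (2 * M * (1 + real k / 2)))\<^sup>2) \<le> D2 fX fYX k"
proof -
  have fZX_le_M: "fZX x z \<le> M" if "\<bar>z\<bar> \<le> r" for x z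
    unfolding M_def using that by (intro cSup_upper[OF _ M_bdd]) auto
  have "0 \<le> M"
    using fZX_le_M[of 0 0] fZX_nonneg[of 0 0] r_pos by linarith
  show ?thesis
  proof (cases "M = 0")
    case True
    then show ?thesis
      by simp \<comment> \<open>the bound is 0 here, since x / 0 = 0\<close>
  next
    case False
    with \<open>0 \<le> M\<close> have "0 < M"
      by simp
    show ?thesis
    proof (intro exI allI impI)
      fix k :: nat
      assume "nat \<lceil>1 / (M * r)\<rceil> + 1 \<le> k"
      then have "0 < k" and "1 / (M * r) \<le> k"
        by linarith+
      define s where "s = 1 / (2 * M * (1 + real k / 2))"
      note s = optimal_radius_bounds[OF \<open>0 < M\<close> r_pos \<open>0 < k\<close> \<open>1 / (M * r) \<le> k\<close>, folded s_def]
      have "fZX x z \<le> M" if "\<bar>z\<bar> \<le> s" for x z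
        using that s(2) by (intro fZX_le_M) linarith
      then have "ennreal (s\<^sup>2 * (1 - 2 * M * s) ^ k) \<le> D2 fX fYX k"
        using s(1) by (intro D2_ge_of_bounded_error_density[OF fX_meas fX_nonneg fX_prob fYX_meas
              fYX_nonneg fYX_prob fZX_meas fZX_density _ _ \<open>0 \<le> M\<close> s(3) \<open>0 < k\<close>]) auto
      with s(4) show "ennreal (exp (-2) * s\<^sup>2) \<le> D2 fX fYX k"
        by (metis mult.commute mult_right_mono ennreal_leI order.trans zero_le_power2)
    qed
  qed
qed

end
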